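(* Let $R$ be a commutative ring, $C=(c_{ij})_{i,j=1}^n$ a matrix with entries in $R$, and ${\bf a}=(a_i)_{i=1}^n$, ${\bf b}=(b_i)_{i=1}^n$ vectors with entries in $R$. Then $$\det({\bf a}{\bf b}^{\mathrm T}-C)=\det(-C)+\sum_{\vec G}(-1)^{\#(\text{cycles of }\vec G)}\,b_{s(\vec G)}\,a_{t(\vec G)}\prod_{ij\in E(\vec G)}c_{ij},$$ where the sum runs over all directed graphs $\vec G$ on the vertex set $\{1,\ldots,n\}$ in which one connected component is a directed path (possibly of length $0$, i.e. an isolated vertex) from a source $s(\vec G)$ to a sink $t(\vec G)$ and all other connected components are directed cycles (possibly of length $1$, i.e. a loop $ii$).
   Context: In a directed graph, $ij\in E(\vec G)$ denotes a directed edge from $i$ to $j$ (a loop $ii$ contributes $c_{ii}$). Every vertex of $\{1,\ldots,n\}$ belongs to exactly one component of $\vec G$. The determinant is $\det A=\sum_{\pi}\mathrm{sgn}(\pi)\prod_i a_{i\pi(i)}$. *)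

theory Defs
  imports "HOL-Analysis.Analysis"
begin

text \<open>A directed graph on the (finite) vertex set UNIV of a finite type is given by its
edge set E; a pair (i,j) in E is the directed edge ij (a pair (i,i) is a loop).\<close>

definition dcomponents :: "'v set \<Rightarrow> ('v \<times> 'v) set \<Rightarrow> 'v set set" where
  "dcomponents V E = (\<lambda>v. {w \<in> V. (v, w) \<in> (E \<union> E\<inverse>)\<^sup>*}) ` V"

definition is_dpath :: "'v set \<Rightarrow> ('v \<times> 'v) set \<Rightarrow> 'v \<Rightarrow> 'v \<Rightarrow> bool" where
  "is_dpath V E s t \<longleftrightarrow> (\<exists>vs. vs \<noteq> [] \<and> distinct vs \<and> set vs = V \<and> hd vs = s \<and> last vs = t \<and>
      E = {(vs ! k, vs ! Suc k) | k. Suc k < length vs})"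

text \<open>(V, E) is a directed cycle (length 1 allowed: a single vertex with a loop).\<close>
definition is_dcycle :: "'v set \<Rightarrow> ('v \<times> 'v) set \<Rightarrow> bool" where
  "is_dcycle V E \<longleftrightarrow> (\<exists>vs. vs \<noteq> [] \<and> distinct vs \<and> set vs = V \<and>
      E = {(vs ! k, vs ! (Suc k mod length vs)) | k. k < length vs})"

definition path_cycles_graph :: "('v \<times> 'v) set \<Rightarrow> 'v \<Rightarrow> 'v \<Rightarrow> bool" where
  "path_cycles_graph E s t \<longleftrightarrow>
     (\<exists>P \<in> dcomponents UNIV E. is_dpath P (E \<inter> P \<times> P) s t \<and>
        (\<forall>Q \<in> dcomponents UNIV E - {P}. is_dcycle Q (E \<inter> Q \<times> Q)))"

definition num_cycles :: "('v \<times> 'v) set \<Rightarrow> nat" where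
  "num_cycles E = card {Q \<in> dcomponents UNIV E. is_dcycle Q (E \<inter> Q \<times> Q)}"

end

theory Submission
  imports Defs "HOL-Combinatorics.Orbits" "HOL-Combinatorics.Cycles"
begin

text \<open>
  Expanding \<open>det (a b\<^sup>T + M)\<close> multilinearly in the rows, every term that takes two rows from
  the rank-one part vanishes. What is left is \<open>det M\<close> plus, for every row \<open>k\<close> and permutation
  \<open>p\<close>, the term \<open>sign p * a\<^sub>k * b\<^sub>p\<^sub>k\<close> times the product of \<open>M\<^sub>i\<^sub>,\<^sub>p\<^sub>i\<close> over \<open>i \<noteq> k\<close>.
  Deleting the edge \<open>k \<rightarrow> p k\<close> from the functional digraph of \<open>p\<close> turns the cycle through
  \<open>k\<close> into a directed path from \<open>p k\<close> to \<open>k\<close> and keeps the other cycles; conversely a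
  path-cycle graph closes up to a unique permutation, so the pairs \<open>(p, k)\<close> correspond
  bijectively to the graphs of the sum. A permutation with \<open>c\<close> orbits has sign \<open>(-1)\<^sup>n\<^sup>-\<^sup>c\<close>,
  its graph has \<open>c - 1\<close> cycles, and the \<open>n - 1\<close> signs coming from \<open>M = -C\<close> turn
  \<open>(-1)\<^sup>n\<^sup>-\<^sup>c\<close> into \<open>(-1)\<^sup>c\<^sup>-\<^sup>1\<close>.
\<close>

section \<open>Signs of permutations and their orbits\<close>

lemma orbit_eq_if_mem:
  assumes "permutation p" "y \<in> orbit p x"
  shows "orbit p y = orbit p x"
  using assms by (metis cyclic_on_orbit' orbit_cyclic_eq3)

lemma orbit_transpose_comp_outside:
  assumes perm: "permutation p" and z: "z \<notin> orbit p x"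
  shows "orbit (Transposition.transpose x (p x) \<circ> p) z = orbit p z"
proof (rule orbit_cong)
  show "z \<in> orbit p z" using perm by (rule permutation_self_in_orbit)
next
  fix w assume w: "w \<in> orbit p z"
  have "p w \<notin> orbit p x"
  proof
    assume "p w \<in> orbit p x"
    then have "orbit p x = orbit p z"
      using orbit_eq_if_mem[OF perm] w orbit.step[OF w] by metis
    then show False using z permutation_self_in_orbit[OF perm, of z] by simp
  qed
  then have "p w \<noteq> x" "p w \<noteq> p x"
    using permutation_self_in_orbit[OF perm, of x] orbit.base[of p x] by auto
  then show "(Transposition.transpose x (p x) \<circ> p) w = p w" by simp
qed

lemma orbit_transpose_comp_split:
  assumes perm: "permutation p" and px: "p x \<noteq> x"
  defines "q \<equiv> Transposition.transpose x (p x) \<circ> p"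
  shows "orbit q (p x) = orbit p x - {x}"
proof
  have inj: "inj p" using perm permutation_bijective bij_is_inj by blast
  have closed: "q w \<in> orbit p x - {x}" if "w \<in> orbit p x - {x}" for w
  proof -
    have "p w \<in> orbit p x" "p w \<noteq> p x" using that inj orbit.step[of w p x] by (auto dest: injD)
    then show ?thesis using px orbit.base[of p x] by (cases "p w = x") (auto simp: q_def)
  qed
  have pxo: "p x \<in> orbit p x - {x}" using px orbit.base[of p x] by simp
  show "orbit q (p x) \<subseteq> orbit p x - {x}"
  proof
    fix w assume "w \<in> orbit q (p x)"
    then show "w \<in> orbit p x - {x}" by induction (use closed pxo in blast)+
  qed
  have qperm: "permutation q" unfolding q_def by (intro permutation_compose perm permutation_swap_id)
  have iterate: "(p ^^ n) (p x) = x \<or> (p ^^ n) (p x) \<in> orbit q (p x)" for n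
  proof (induction n)
    case 0 show ?case using permutation_self_in_orbit[OF qperm] by simp
  next
    case (Suc n)
    define w where "w = (p ^^ n) (p x)"
    show ?case
    proof (cases "w = x \<or> p w = x")
      case True then show ?thesis using permutation_self_in_orbit[OF qperm, of "p x"] by (auto simp: w_def)
    next
      case False
      moreover have "p w \<noteq> p x" using False inj by (metis injD)
      ultimately have "q w = p w" by (simp add: q_def)
      moreover have "w \<in> orbit q (p x)" using Suc False by (simp add: w_def)
      ultimately show ?thesis using orbit.step[of w q "p x"] by (simp add: w_def)
    qed
  qed
  show "orbit p x - {x} \<subseteq> orbit q (p x)"
  proof
    fix w assume w: "w \<in> orbit p x - {x}"
    have "orbit p x = {(p ^^ n) (p x) | n. True}"
      using permutation_orbit_step[OF perm, of x] orbit_altdef_permutation[OF perm, of "p x"] by simp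
    then obtain n where "w = (p ^^ n) (p x)" using w by blast
    then show "w \<in> orbit q (p x)" using iterate[of n] w by simp
  qed
qed

lemma orbits_transpose_comp:
  assumes perm: "permutation p" and px: "p x \<noteq> x"
  defines "q \<equiv> Transposition.transpose x (p x) \<circ> p"
  shows "range (orbit q) = insert {x} (insert (orbit p x - {x}) (range (orbit p) - {orbit p x}))"
proof -
  have qperm: "permutation q" unfolding q_def by (intro permutation_compose perm permutation_swap_id)
  have qx: "orbit q x = {x}" by (simp add: orbit_eq_singleton_iff q_def)
  have split: "orbit q (p x) = orbit p x - {x}"
    unfolding q_def by (rule orbit_transpose_comp_split[OF perm px])
  have outside: "orbit q z = orbit p z" if "z \<notin> orbit p x" for z
    unfolding q_def using orbit_transpose_comp_outside[OF perm that] .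
  have "range (orbit q) \<subseteq> insert {x} (insert (orbit p x - {x}) (range (orbit p) - {orbit p x}))"
  proof
    fix Q assume "Q \<in> range (orbit q)"
    then obtain z where Q: "Q = orbit q z" by blast
    have "orbit q z \<in> insert {x} (insert (orbit p x - {x}) (range (orbit p) - {orbit p x}))"
    proof (cases "z \<in> orbit p x")
      case True
      show ?thesis
      proof (cases "z = x")
        case False
        then have "orbit q z = orbit q (p x)"
          using True split orbit_eq_if_mem[OF qperm] by blast
        then show ?thesis using split by simp
      qed (simp add: qx)
    next
      case False
      then have "orbit p z \<noteq> orbit p x" using permutation_self_in_orbit[OF perm, of z] by blast
      then show ?thesis using outside[OF False] by simp
    qed
    then show "Q \<in> insert {x} (insert (orbit p x - {x}) (range (orbit p) - {orbit p x}))"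
      using Q by simp
  qed
  moreover have "range (orbit p) - {orbit p x} \<subseteq> range (orbit q)"
  proof
    fix Q assume "Q \<in> range (orbit p) - {orbit p x}"
    then obtain z where Q: "Q = orbit p z" and "orbit p z \<noteq> orbit p x" by blast
    then have "z \<notin> orbit p x" using orbit_eq_if_mem[OF perm] by blast
    then show "Q \<in> range (orbit q)" using outside Q by (metis rangeI)
  qed
  moreover have "{x} \<in> range (orbit q)" "orbit p x - {x} \<in> range (orbit q)"
    using qx split by (metis rangeI)+
  ultimately show ?thesis by blast
qed

lemma card_orbits_transpose_comp:
  fixes p :: "'a::finite \<Rightarrow> 'a"
  assumes perm: "permutation p" and px: "p x \<noteq> x"
  shows "card (range (orbit (Transposition.transpose x (p x) \<circ> p))) = Suc (card (range (orbit p)))"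
proof -
  let ?O = "range (orbit p) - {orbit p x}"
  have singleton_new: "{x} \<notin> ?O"
  proof
    assume "{x} \<in> ?O"
    then obtain z where z: "{x} = orbit p z" "orbit p z \<noteq> orbit p x" by blast
    have "z \<in> orbit p z" using perm by (rule permutation_self_in_orbit)
    then have "z = x" using z(1) by blast
    then show False using z(2) by simp
  qed
  have rest_new: "orbit p x - {x} \<notin> ?O"
  proof
    assume "orbit p x - {x} \<in> ?O"
    then obtain z where z: "orbit p x - {x} = orbit p z" "orbit p z \<noteq> orbit p x" by blast
    have "p x \<in> orbit p z" using z(1) px orbit.base[of p x] by blast
    then have "orbit p (p x) = orbit p z" by (rule orbit_eq_if_mem[OF perm])
    then show False using z(2) permutation_orbit_step[OF perm, of x] by simp
  qed
  have distinct_new: "{x} \<noteq> orbit p x - {x}" by blast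
  have "card (range (orbit (Transposition.transpose x (p x) \<circ> p))) =
      card (insert {x} (insert (orbit p x - {x}) ?O))"
    by (simp only: orbits_transpose_comp[OF perm px])
  also have "\<dots> = Suc (Suc (card ?O))"
    using singleton_new rest_new distinct_new by (simp add: card_insert_disjoint)
  also have "Suc (card ?O) = card (range (orbit p))"
    using card_Diff_singleton[of "orbit p x" "range (orbit p)"] card_gt_0_iff[of "range (orbit p)"]
    by simp
  finally show ?thesis .
qed

theorem sign_eq_neg_one_pow_orbits:
  fixes p :: "'a::finite \<Rightarrow> 'a"
  assumes "permutation p"
  shows "sign p = (-1) ^ (CARD('a) - card (range (orbit p)))"
  using assms
proof (induction "card {x. p x \<noteq> x}" arbitrary: p rule: less_induct)
  case less
  show ?case
  proof (cases "p = id")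
    case True
    have "orbit (id :: 'a \<Rightarrow> 'a) = (\<lambda>x. {x})" by (rule ext) (simp add: orbit_eq_singleton_iff)
    then have "card (range (orbit (id :: 'a \<Rightarrow> 'a))) = CARD('a)" by (simp add: card_image)
    then show ?thesis using True by simp
  next
    case False
    then obtain x where px: "p x \<noteq> x" by (auto simp: fun_eq_iff)
    define q where "q = Transposition.transpose x (p x) \<circ> p"
    have qperm: "permutation q" unfolding q_def by (intro permutation_compose less.prems permutation_swap_id)
    have inj: "inj p" using less.prems permutation_bijective bij_is_inj by blast
    have "q y = y" if "p y = y" for y
    proof -
      have "y \<noteq> x" "y \<noteq> p x" using that px inj by (auto dest: injD)
      then show ?thesis using that by (simp add: q_def)
    qed
    moreover have "q x = x" by (simp add: q_def)
    ultimately have "{y. q y \<noteq> y} \<subset> {y. p y \<noteq> y}" using px by blast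
    then have IH: "sign q = (-1) ^ (CARD('a) - card (range (orbit q)))"
      using less.hyps qperm by (simp add: psubset_card_mono)
    have "sign q = - sign p"
      using sign_compose[OF permutation_swap_id less.prems] sign_swap_id[of x "p x"] px by (simp add: q_def)
    moreover have "CARD('a) - card (range (orbit p)) = Suc (CARD('a) - card (range (orbit q)))"
    proof -
      have "card (range (orbit q)) \<le> CARD('a)" by (rule card_image_le) simp
      then show ?thesis using card_orbits_transpose_comp[OF less.prems px, folded q_def] by linarith
    qed
    ultimately show ?thesis using IH by (simp only: power_Suc)
  qed
qed

section \<open>Edge sets of paths and cycles given by vertex lists\<close>

definition path_edges :: "'v list \<Rightarrow> ('v \<times> 'v) set" where
  "path_edges vs = {(vs ! k, vs ! Suc k) | k. Suc k < length vs}"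

definition cycle_edges :: "'v list \<Rightarrow> ('v \<times> 'v) set" where
  "cycle_edges vs = {(vs ! k, vs ! (Suc k mod length vs)) | k. k < length vs}"

lemma is_dpath_iff:
  "is_dpath V E s t \<longleftrightarrow> (\<exists>vs. vs \<noteq> [] \<and> distinct vs \<and> set vs = V \<and> hd vs = s \<and> last vs = t \<and>
      E = path_edges vs)"
  unfolding is_dpath_def path_edges_def ..

lemma is_dcycle_iff:
  "is_dcycle V E \<longleftrightarrow> (\<exists>vs. vs \<noteq> [] \<and> distinct vs \<and> set vs = V \<and> E = cycle_edges vs)"
  unfolding is_dcycle_def cycle_edges_def ..

lemma cycle_edges_eq_graph:
  assumes "\<And>k. k < length vs \<Longrightarrow> vs ! (Suc k mod length vs) = f (vs ! k)"
  shows "cycle_edges vs = {(i, f i) | i. i \<in> set vs}"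
  unfolding cycle_edges_def using assms by (auto simp: in_set_conv_nth)

lemma path_edges_rotate1:
  assumes "distinct vs"
  shows "path_edges (rotate1 vs) = {(i, j) \<in> cycle_edges vs. i \<noteq> hd vs}"
proof (cases "vs = []")
  case False
  have "rotate1 vs ! k = vs ! Suc k" "rotate1 vs ! Suc k = vs ! (Suc (Suc k) mod length vs)"
    if "Suc k < length vs" for k
    using that by (simp_all add: nth_rotate1)
  then have "path_edges (rotate1 vs) = {(vs ! Suc k, vs ! (Suc (Suc k) mod length vs)) | k. Suc k < length vs}"
    unfolding path_edges_def by force
  also have "\<dots> = {(vs ! k, vs ! (Suc k mod length vs)) | k. k < length vs \<and> k \<noteq> 0}"
    by auto (metis Suc_pred')
  also have "\<dots> = {(i, j) \<in> cycle_edges vs. i \<noteq> hd vs}"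
  proof -
    have "vs ! k \<noteq> hd vs \<longleftrightarrow> k \<noteq> 0" if "k < length vs" for k
      using assms False that by (simp add: hd_conv_nth nth_eq_iff_index_eq)
    then show ?thesis unfolding cycle_edges_def by auto
  qed
  finally show ?thesis .
qed (simp add: path_edges_def cycle_edges_def)

lemma single_valued_path_edges: "distinct vs \<Longrightarrow> single_valued (path_edges vs)"
  by (auto simp: single_valued_def path_edges_def nth_eq_iff_index_eq)

lemma single_valued_converse_path_edges: "distinct vs \<Longrightarrow> single_valued ((path_edges vs)\<inverse>)"
  by (auto simp: single_valued_def path_edges_def nth_eq_iff_index_eq)

lemma Domain_path_edges:
  assumes "vs \<noteq> []" "distinct vs"
  shows "Domain (path_edges vs) = set vs - {last vs}"
proof -
  have not_last: "vs ! k \<noteq> last vs \<longleftrightarrow> Suc k < length vs" if "k < length vs" for k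
    using assms that by (auto simp: last_conv_nth nth_eq_iff_index_eq)
  have "Domain (path_edges vs) = {vs ! k | k. Suc k < length vs}"
    unfolding path_edges_def by blast
  also have "\<dots> = set vs - {last vs}"
  proof
    show "{vs ! k | k. Suc k < length vs} \<subseteq> set vs - {last vs}"
    proof clarify
      fix k assume "Suc k < length vs"
      then show "vs ! k \<in> set vs - {last vs}" using not_last[of k] by simp
    qed
    show "set vs - {last vs} \<subseteq> {vs ! k | k. Suc k < length vs}"
    proof
      fix x assume "x \<in> set vs - {last vs}"
      then obtain k where "k < length vs" "x = vs ! k" "vs ! k \<noteq> last vs"
        by (auto simp: in_set_conv_nth)
      then show "x \<in> {vs ! k | k. Suc k < length vs}" using not_last by blast
    qed
  qed
  finally show ?thesis .
qed

lemma hd_notin_Range_path_edges: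
  assumes "distinct vs"
  shows "hd vs \<notin> Range (path_edges vs)"
proof
  assume "hd vs \<in> Range (path_edges vs)"
  then obtain k where k: "Suc k < length vs" "vs ! Suc k = hd vs" by (auto simp: path_edges_def)
  then have "vs ! Suc k = vs ! 0" by (metis hd_conv_nth list.size(3) not_less0)
  then show False using assms k(1) nth_eq_iff_index_eq[OF assms, of "Suc k" 0] by fastforce
qed

lemma single_valued_cycle_edges: "distinct vs \<Longrightarrow> single_valued (cycle_edges vs)"
  by (auto simp: single_valued_def cycle_edges_def nth_eq_iff_index_eq)

lemma single_valued_converse_cycle_edges:
  assumes "distinct vs"
  shows "single_valued ((cycle_edges vs)\<inverse>)"
proof (rule single_valuedI)
  have Suc_mod: "Suc i mod length vs = (if Suc i = length vs then 0 else Suc i)" if "i < length vs" for i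
    using that by (cases "Suc i = length vs") auto
  fix x x' y assume "(y, x) \<in> (cycle_edges vs)\<inverse>" "(y, x') \<in> (cycle_edges vs)\<inverse>"
  then obtain i j where ij: "i < length vs" "j < length vs" "x = vs ! i" "x' = vs ! j"
    "vs ! (Suc i mod length vs) = vs ! (Suc j mod length vs)"
    by (auto simp: cycle_edges_def)
  have "Suc i mod length vs = Suc j mod length vs"
  proof -
    have "0 < length vs" using ij(1) by linarith
    then show ?thesis using ij(5) nth_eq_iff_index_eq[OF assms] mod_less_divisor by blast
  qed
  then have "i = j" using ij(1,2) Suc_mod[of i] Suc_mod[of j] by (auto split: if_splits)
  then show "x = x'" using ij(3,4) by simp
qed

lemma Domain_cycle_edges: "Domain (cycle_edges vs) = set vs"
  by (force simp: cycle_edges_def in_set_conv_nth)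

definition dcomponent :: "('v \<times> 'v) set \<Rightarrow> 'v \<Rightarrow> 'v set" where
  "dcomponent E v = {w. (v, w) \<in> (E \<union> E\<inverse>)\<^sup>*}"

lemma dcomponents_UNIV: "dcomponents UNIV E = range (dcomponent E)"
  by (simp add: dcomponents_def dcomponent_def)

lemma dcomponent_self: "v \<in> dcomponent E v"
  by (simp add: dcomponent_def)

lemma dcomponent_eq:
  assumes "w \<in> dcomponent E v"
  shows "dcomponent E w = dcomponent E v"
proof -
  let ?R = "E \<union> E\<inverse>"
  have vw: "(v, w) \<in> ?R\<^sup>*" using assms by (simp add: dcomponent_def)
  then have "(w, v) \<in> (?R\<inverse>)\<^sup>*" by (simp add: rtrancl_converseI)
  moreover have "?R\<inverse> = ?R" by auto
  ultimately have "(w, v) \<in> ?R\<^sup>*" by simp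
  with vw show ?thesis unfolding dcomponent_def by (blast intro: rtrancl_trans)
qed

lemma edge_in_dcomponent:
  assumes "(u, v) \<in> E"
  shows "(u, v) \<in> E \<inter> dcomponent E u \<times> dcomponent E u" and "dcomponent E v = dcomponent E u"
proof -
  have v: "v \<in> dcomponent E u" using assms by (auto simp: dcomponent_def)
  then show "(u, v) \<in> E \<inter> dcomponent E u \<times> dcomponent E u"
    using assms dcomponent_self[of u E] by simp
  show "dcomponent E v = dcomponent E u" using v by (rule dcomponent_eq)
qed

section \<open>The digraph of a permutation with one edge deleted\<close>

definition perm_graph_cut :: "('v \<Rightarrow> 'v) \<Rightarrow> 'v \<Rightarrow> ('v \<times> 'v) set" where
  "perm_graph_cut p k = {(i, p i) | i. i \<noteq> k}"

lemma perm_graph_cut_eq_image: "perm_graph_cut p k = (\<lambda>i. (i, p i)) ` (- {k})"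
  by (auto simp: perm_graph_cut_def)

lemma prod_perm_graph_cut:
  "(\<Prod>(i, j)\<in>perm_graph_cut p k. f i j) = (\<Prod>i\<in>- {k}. f i (p i))"
  unfolding perm_graph_cut_eq_image by (subst prod.reindex) (auto simp: inj_on_def)

lemma perm_graph_cut_eqD:
  assumes "perm_graph_cut p k = perm_graph_cut q k" "p k = q k"
  shows "p = q"
proof
  fix i show "p i = q i"
    using assms by (cases "i = k") (auto simp: perm_graph_cut_def)
qed

lemma perm_graph_cut_reaches_cut_vertex:
  assumes perm: "permutation p"
  shows "(p k, k) \<in> (perm_graph_cut p k)\<^sup>*"
proof (rule ccontr)
  assume unreachable: "(p k, k) \<notin> (perm_graph_cut p k)\<^sup>*"
  have reach: "(p k, (p ^^ n) (p k)) \<in> (perm_graph_cut p k)\<^sup>*" for n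
  proof (induction n)
    case (Suc n)
    then have "(p ^^ n) (p k) \<noteq> k" using unreachable by auto
    then have "((p ^^ n) (p k), (p ^^ Suc n) (p k)) \<in> perm_graph_cut p k"
      by (auto simp: perm_graph_cut_def)
    with Suc show ?case by (rule rtrancl_into_rtrancl)
  qed simp
  have "k \<in> orbit p (p k)"
    using permutation_orbit_step[OF perm] permutation_self_in_orbit[OF perm] by simp
  then obtain n where "k = (p ^^ n) (p k)" unfolding orbit_altdef_permutation[OF perm] by blast
  then show False using reach[of n] unreachable by metis
qed

lemma dcomponent_perm_graph_cut:
  assumes perm: "permutation p"
  shows "dcomponent (perm_graph_cut p k) v = orbit p v"
proof
  let ?R = "perm_graph_cut p k \<union> (perm_graph_cut p k)\<inverse>"
  have pred_in_orbit: "z \<in> orbit p v" if "p z \<in> orbit p v" for z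
    using that orbit_eq_if_mem[OF perm] permutation_orbit_step[OF perm, of z]
      permutation_self_in_orbit[OF perm, of z] by metis
  show "dcomponent (perm_graph_cut p k) v \<subseteq> orbit p v"
  proof
    fix w assume "w \<in> dcomponent (perm_graph_cut p k) v"
    then have "(v, w) \<in> ?R\<^sup>*" by (simp add: dcomponent_def)
    then show "w \<in> orbit p v"
    proof (induction rule: rtrancl_induct)
      case base then show ?case using perm by (rule permutation_self_in_orbit)
    next
      case (step y z)
      then consider "z = p y" | "y = p z" by (auto simp: perm_graph_cut_def)
      then show ?case using step.IH pred_in_orbit by cases (auto intro: orbit.step)
    qed
  qed
  have step: "(z, p z) \<in> ?R\<^sup>*" for z
  proof (cases "z = k")
    case True
    have "(p k, k) \<in> ?R\<^sup>*"
      using perm_graph_cut_reaches_cut_vertex[OF perm] rtrancl_mono[of _ ?R] by blast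
    then have "(k, p k) \<in> (?R\<inverse>)\<^sup>*" by (simp add: rtrancl_converseI)
    moreover have "?R\<inverse> = ?R" by auto
    ultimately show ?thesis using True by simp
  qed (auto simp: perm_graph_cut_def)
  have "(v, (p ^^ n) v) \<in> ?R\<^sup>*" for n
    by (induction n) (auto intro: rtrancl_trans[OF _ step])
  then show "orbit p v \<subseteq> dcomponent (perm_graph_cut p k) v"
    by (auto simp: dcomponent_def orbit_altdef_permutation[OF perm])
qed

lemma perm_graph_cut_restrict_orbit:
  assumes perm: "permutation p"
  shows "perm_graph_cut p k \<inter> orbit p v \<times> orbit p v = {(i, p i) | i. i \<in> orbit p v \<and> i \<noteq> k}"
  by (auto simp: perm_graph_cut_def intro: orbit.step)

lemma cycle_edges_support:
  assumes perm: "permutation p"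
  shows "cycle_edges (support p v) = {(i, p i) | i. i \<in> orbit p v}"
proof -
  have "cycle_edges (support p v) = {(i, p i) | i. i \<in> set (support p v)}"
  proof (rule cycle_edges_eq_graph)
    fix j assume "j < length (support p v)"
    then show "support p v ! (Suc j mod length (support p v)) = p (support p v ! j)"
      using funpow_mod_eq[of "least_power p v" p v "Suc j"] least_power_of_permutation[OF perm]
      by simp
  qed
  moreover have "set (support p v) = orbit p v"
    unfolding support_set[OF perm] orbit_altdef_permutation[OF perm] by blast
  ultimately show ?thesis by simp
qed

lemma is_dpath_perm_graph_cut:
  assumes perm: "permutation p"
  shows "is_dpath (orbit p k) (perm_graph_cut p k \<inter> orbit p k \<times> orbit p k) (p k) k"
proof -
  \<comment> \<open>The path is the cycle \<open>vs\<close> of \<open>p\<close> through \<open>k\<close>, rotated to start at \<open>p k\<close> and end at \<open>k\<close>.\<close>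
  define vs where "vs = support p k"
  have ne: "vs \<noteq> []" using least_power_of_permutation(2)[OF perm] by (simp add: vs_def)
  have dist: "distinct vs" unfolding vs_def using perm by (rule cycle_of_permutation)
  have hd: "hd vs = k" using ne by (simp add: vs_def hd_map)
  have "hd (rotate1 vs) = vs ! (1 mod length vs)"
    using hd_rotate_conv_nth[OF ne, of 1] by simp
  also have "\<dots> = (p ^^ (1 mod least_power p k)) k"
  proof -
    have "1 mod least_power p k < least_power p k"
      using least_power_of_permutation(2)[OF perm] by (rule mod_less_divisor)
    then show ?thesis unfolding vs_def by (simp only: length_map length_upt nth_map_upt) simp
  qed
  also have "\<dots> = p k"
    using funpow_mod_eq[of "least_power p k" p k 1] least_power_of_permutation(1)[OF perm] by simp
  finally have "hd (rotate1 vs) = p k" .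
  moreover have "last (rotate1 vs) = k" using ne hd by (simp add: rotate1_hd_tl)
  moreover have "set (rotate1 vs) = orbit p k"
    unfolding vs_def set_rotate1 support_set[OF perm] orbit_altdef_permutation[OF perm] by blast
  moreover have "path_edges (rotate1 vs) = perm_graph_cut p k \<inter> orbit p k \<times> orbit p k"
    unfolding path_edges_rotate1[OF dist] perm_graph_cut_restrict_orbit[OF perm]
    using cycle_edges_support[OF perm, of k] hd by (auto simp: vs_def)
  ultimately show ?thesis using ne dist unfolding is_dpath_iff by (metis rotate1_is_Nil_conv distinct1_rotate)
qed

lemma is_dcycle_perm_graph_cut:
  assumes perm: "permutation p" and "k \<notin> orbit p v"
  shows "is_dcycle (orbit p v) (perm_graph_cut p k \<inter> orbit p v \<times> orbit p v)"
proof -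
  have "support p v \<noteq> []" using least_power_of_permutation(2)[OF perm] by simp
  moreover have "distinct (support p v)" using perm by (rule cycle_of_permutation)
  moreover have "set (support p v) = orbit p v"
    unfolding support_set[OF perm] orbit_altdef_permutation[OF perm] by blast
  moreover have "cycle_edges (support p v) = perm_graph_cut p k \<inter> orbit p v \<times> orbit p v"
    unfolding cycle_edges_support[OF perm] perm_graph_cut_restrict_orbit[OF perm] using assms(2) by auto
  ultimately show ?thesis unfolding is_dcycle_iff by blast
qed

lemma not_is_dcycle_perm_graph_cut:
  assumes "permutation p"
  shows "\<not> is_dcycle (orbit p k) (perm_graph_cut p k \<inter> orbit p k \<times> orbit p k)"
proof
  assume "is_dcycle (orbit p k) (perm_graph_cut p k \<inter> orbit p k \<times> orbit p k)"
  then have "Domain (perm_graph_cut p k \<inter> orbit p k \<times> orbit p k) = orbit p k"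
    by (auto simp: is_dcycle_iff Domain_cycle_edges)
  moreover have "k \<notin> Domain (perm_graph_cut p k)" by (auto simp: perm_graph_cut_def)
  ultimately have "k \<notin> orbit p k" by blast
  then show False using assms by (simp add: permutation_self_in_orbit)
qed

lemma is_dcycle_orbit_perm_graph_cut_iff:
  assumes perm: "permutation p"
  shows "is_dcycle (orbit p v) (perm_graph_cut p k \<inter> orbit p v \<times> orbit p v) \<longleftrightarrow> orbit p v \<noteq> orbit p k"
proof (cases "k \<in> orbit p v")
  case True
  then show ?thesis using not_is_dcycle_perm_graph_cut[OF perm] orbit_eq_if_mem[OF perm] by metis
next
  case False
  then show ?thesis using is_dcycle_perm_graph_cut[OF perm] permutation_self_in_orbit[OF perm] by metis
qed

theorem path_cycles_graph_perm_graph_cut: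
  assumes perm: "permutation p"
  shows "path_cycles_graph (perm_graph_cut p k) (p k) k"
    and "num_cycles (perm_graph_cut p k) = card (range (orbit p)) - 1"
proof -
  have components: "dcomponents UNIV (perm_graph_cut p k) = range (orbit p)"
    unfolding dcomponents_UNIV dcomponent_perm_graph_cut[OF perm] ..
  show "path_cycles_graph (perm_graph_cut p k) (p k) k"
    unfolding path_cycles_graph_def components
    using is_dpath_perm_graph_cut[OF perm] is_dcycle_orbit_perm_graph_cut_iff[OF perm] by blast
  have "{Q \<in> range (orbit p). is_dcycle Q (perm_graph_cut p k \<inter> Q \<times> Q)} = range (orbit p) - {orbit p k}"
    using is_dcycle_orbit_perm_graph_cut_iff[OF perm] by blast
  then show "num_cycles (perm_graph_cut p k) = card (range (orbit p)) - 1"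
    unfolding num_cycles_def components by (simp add: card_Diff_singleton)
qed

section \<open>Every path-cycle graph arises this way\<close>

lemma path_cycles_graph_dcomponent_cases:
  assumes "path_cycles_graph E s t"
  obtains (path) vs where "vs \<noteq> []" "distinct vs" "set vs = dcomponent E u" "hd vs = s" "last vs = t"
      "E \<inter> dcomponent E u \<times> dcomponent E u = path_edges vs"
    | (cycle) vs where "distinct vs" "set vs = dcomponent E u" "s \<notin> set vs" "t \<notin> set vs"
      "E \<inter> dcomponent E u \<times> dcomponent E u = cycle_edges vs"
proof -
  obtain P where P: "P \<in> range (dcomponent E)" "is_dpath P (E \<inter> P \<times> P) s t"
    and cycles: "\<forall>Q \<in> range (dcomponent E) - {P}. is_dcycle Q (E \<inter> Q \<times> Q)"
    using assms unfolding path_cycles_graph_def dcomponents_UNIV by (elim bexE conjE)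
  obtain ps where ps: "ps \<noteq> []" "distinct ps" "set ps = P" "hd ps = s" "last ps = t"
    "E \<inter> P \<times> P = path_edges ps"
    using is_dpath_iff[THEN iffD1, OF P(2)] by blast
  have "s \<in> P" "t \<in> P" using hd_in_set[OF ps(1)] last_in_set[OF ps(1)] ps(3-5) by auto
  moreover obtain w where "P = dcomponent E w" using P(1) by blast
  ultimately have st: "dcomponent E s = P" "dcomponent E t = P" by (simp_all add: dcomponent_eq)
  show thesis
  proof (cases "dcomponent E u = P")
    case True
    show thesis by (rule path[of ps]) (use ps True in simp_all)
  next
    case False
    then have "is_dcycle (dcomponent E u) (E \<inter> dcomponent E u \<times> dcomponent E u)"
      using cycles by simp
    then obtain cs where cs: "distinct cs" "set cs = dcomponent E u"
      "E \<inter> dcomponent E u \<times> dcomponent E u = cycle_edges cs"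
      unfolding is_dcycle_iff by blast
    have "v \<notin> dcomponent E u" if "dcomponent E v = P" for v
    proof
      assume "v \<in> dcomponent E u"
      then have "dcomponent E v = dcomponent E u" by (rule dcomponent_eq)
      with that False show False by simp
    qed
    then have "s \<notin> set cs" "t \<notin> set cs" using st cs(2) by blast+
    then show thesis using cs by (intro cycle[of cs])
  qed
qed

lemma path_cycles_graph_restrict_dcomponent:
  fixes u :: 'v
  assumes pcg: "path_cycles_graph E s t"
  defines "F \<equiv> E \<inter> dcomponent E u \<times> dcomponent E u"
  shows "single_valued F" and "single_valued (F\<inverse>)" and "u \<in> Domain F \<longleftrightarrow> u \<noteq> t"
    and "u = s \<Longrightarrow> s \<notin> Range F"
proof -
  have "single_valued F \<and> single_valued (F\<inverse>) \<and> (u \<in> Domain F \<longleftrightarrow> u \<noteq> t) \<and> (u = s \<longrightarrow> s \<notin> Range F)"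
    using pcg
  proof (cases rule: path_cycles_graph_dcomponent_cases[where u = u])
    case (path vs)
    then show ?thesis
      using dcomponent_self[of u E] hd_notin_Range_path_edges[of vs]
      by (auto simp: F_def single_valued_path_edges single_valued_converse_path_edges Domain_path_edges)
  next
    case (cycle vs)
    then show ?thesis
      using dcomponent_self[of u E]
      by (auto simp: F_def single_valued_cycle_edges single_valued_converse_cycle_edges Domain_cycle_edges)
  qed
  then show "single_valued F" "single_valued (F\<inverse>)" "u \<in> Domain F \<longleftrightarrow> u \<noteq> t"
    "u = s \<Longrightarrow> s \<notin> Range F"
    by simp_all
qed

lemma path_cycles_graph_degrees:
  assumes pcg: "path_cycles_graph E s t"
  shows "single_valued E" and "single_valued (E\<inverse>)" and "Domain E = - {t}" and "s \<notin> Range E"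
proof -
  let ?piece = "\<lambda>u. E \<inter> dcomponent E u \<times> dcomponent E u"
  note piece = path_cycles_graph_restrict_dcomponent[OF pcg]
  have in_target_piece: "(u, v) \<in> ?piece v" if "(u, v) \<in> E" for u v
    using edge_in_dcomponent[OF that] by simp
  show "single_valued E"
  proof (rule single_valuedI)
    fix u v v' assume uv: "(u, v) \<in> E" and uv': "(u, v') \<in> E"
    have "(u, v) \<in> ?piece u" "(u, v') \<in> ?piece u"
      by (rule edge_in_dcomponent(1)[OF uv], rule edge_in_dcomponent(1)[OF uv'])
    then show "v = v'" using piece(1)[of u] by (blast dest: single_valuedD)
  qed
  show "single_valued (E\<inverse>)"
  proof (rule single_valuedI)
    fix v u u' assume "(v, u) \<in> E\<inverse>" "(v, u') \<in> E\<inverse>"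
    then have "(v, u) \<in> (?piece v)\<inverse>" "(v, u') \<in> (?piece v)\<inverse>"
      by (simp_all add: in_target_piece del: Int_iff)
    then show "u = u'" using piece(2)[of v] by (blast dest: single_valuedD)
  qed
  show "Domain E = - {t}"
  proof (intro set_eqI iffI)
    fix u assume "u \<in> Domain E"
    then obtain v where "(u, v) \<in> E" by blast
    then have "u \<in> Domain (?piece u)" by (blast dest: edge_in_dcomponent(1))
    then show "u \<in> - {t}" using piece(3) by simp
  next
    fix u assume "u \<in> - {t}"
    then have "u \<in> Domain (?piece u)" using piece(3) by simp
    then show "u \<in> Domain E" by blast
  qed
  show "s \<notin> Range E"
  proof
    assume "s \<in> Range E"
    then obtain u where "(u, s) \<in> E" by blast
    then have "s \<in> Range (?piece s)" using in_target_piece by blast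
    with piece(4)[of s] show False by simp
  qed
qed

lemma perm_graph_cut_of_degrees:
  fixes E :: "('v::finite \<times> 'v) set"
  assumes sv: "single_valued E" and sv_conv: "single_valued (E\<inverse>)"
    and dom: "Domain E = - {t}" and ran: "s \<notin> Range E"
  shows "\<exists>f. f permutes UNIV \<and> E = perm_graph_cut f t \<and> f t = s"
proof -
  define f where "f u = (if u = t then s else (THE v. (u, v) \<in> E))" for u
  have edge: "(u, f u) \<in> E" if "u \<noteq> t" for u
  proof -
    have "u \<in> Domain E" using that dom by simp
    then obtain v where v: "(u, v) \<in> E" by blast
    then have "(THE v. (u, v) \<in> E) = v" by (rule the_equality) (use v sv in \<open>blast dest: single_valuedD\<close>)
    then show ?thesis using v that by (simp add: f_def)
  qed
  have out_edge: "(u, v) \<in> E \<longleftrightarrow> u \<noteq> t \<and> v = f u" for u v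
  proof
    assume uv: "(u, v) \<in> E"
    then have "u \<in> Domain E" by blast
    then have "u \<noteq> t" using dom by simp
    then show "u \<noteq> t \<and> v = f u" using uv edge[of u] sv by (blast dest: single_valuedD)
  qed (use edge in blast)
  have "inj f"
  proof (rule injI)
    fix u u' assume eq: "f u = f u'"
    have not_s: "f u \<noteq> s" if "u \<noteq> t" for u
      using edge[OF that] ran by blast
    have ft: "f t = s" by (simp add: f_def)
    show "u = u'"
    proof (cases "u = t")
      case True
      then have "f u' = s" using eq ft by simp
      then have "u' = t" using not_s by auto
      with True show ?thesis by simp
    next
      case False
      then have "f u' \<noteq> s" using eq not_s by metis
      then have "u' \<noteq> t" using ft by auto
      then have "(f u, u) \<in> E\<inverse>" "(f u, u') \<in> E\<inverse>" using False edge[of u] edge[of u'] eq by simp_all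
      then show ?thesis by (rule single_valuedD[OF sv_conv])
    qed
  qed
  then have "f permutes UNIV" by (intro inj_imp_permutes) simp_all
  moreover have "E = perm_graph_cut f t" using out_edge by (auto simp: perm_graph_cut_def)
  ultimately show ?thesis by (auto simp: f_def)
qed

lemma bij_betw_perm_graph_cut:
  "bij_betw (\<lambda>(p, k). (perm_graph_cut p k, p k, k))
     ({p. p permutes (UNIV :: 'v::finite set)} \<times> UNIV) {(E, s, t). path_cycles_graph E s t}"
proof (rule bij_betw_imageI)
  show "inj_on (\<lambda>(p, k). (perm_graph_cut p k, p k, k)) ({p. p permutes UNIV} \<times> UNIV)"
    by (auto intro!: inj_onI dest: perm_graph_cut_eqD)
  show "(\<lambda>(p, k). (perm_graph_cut p k, p k, k)) ` ({p. p permutes (UNIV :: 'v set)} \<times> UNIV) =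
      {(E, s, t). path_cycles_graph E s t}"
  proof (intro set_eqI iffI)
    fix x :: "('v \<times> 'v) set \<times> 'v \<times> 'v"
    assume "x \<in> (\<lambda>(p, k). (perm_graph_cut p k, p k, k)) ` ({p. p permutes UNIV} \<times> UNIV)"
    then obtain p k where x: "x = (perm_graph_cut p k, p k, k)" and p: "p permutes UNIV" by auto
    have "permutation p" by (rule permutes_imp_permutation[OF _ p]) simp
    then show "x \<in> {(E, s, t). path_cycles_graph E s t}"
      using x path_cycles_graph_perm_graph_cut(1) by simp
  next
    fix x :: "('v \<times> 'v) set \<times> 'v \<times> 'v"
    assume "x \<in> {(E, s, t). path_cycles_graph E s t}"
    then obtain E s t where x: "x = (E, s, t)" and pcg: "path_cycles_graph E s t" by auto
    obtain f where "f permutes UNIV" "E = perm_graph_cut f t" "f t = s"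
      using perm_graph_cut_of_degrees[OF path_cycles_graph_degrees[OF pcg]] by blast
    then show "x \<in> (\<lambda>(p, k). (perm_graph_cut p k, p k, k)) ` ({p. p permutes UNIV} \<times> UNIV)"
      using x by force
  qed
qed

section \<open>Determinant of a rank-one update\<close>

lemma det_rows_replaced:
  fixes M :: "'a::comm_ring_1^'n^'n" and b :: "'a^'n"
  shows "det (\<chi> i. if i \<in> S then b else M $ i) =
    (\<Sum>p | p permutes UNIV. of_int (sign p) * ((\<Prod>i\<in>S. b $ p i) * (\<Prod>i\<in>- S. M $ i $ p i)))"
proof -
  have "(\<Prod>i\<in>UNIV. (\<chi> i. if i \<in> S then b else M $ i) $ i $ p i) =
      (\<Prod>i\<in>S. b $ p i) * (\<Prod>i\<in>- S. M $ i $ p i)" for p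
  proof -
    have "(\<Prod>i\<in>UNIV. (\<chi> i. if i \<in> S then b else M $ i) $ i $ p i) =
        (\<Prod>i\<in>UNIV. if i \<in> S then b $ p i else M $ i $ p i)"
      by (intro prod.cong) auto
    also have "\<dots> = (\<Prod>i\<in>UNIV \<inter> {i. i \<in> S}. b $ p i) * (\<Prod>i\<in>UNIV \<inter> - {i. i \<in> S}. M $ i $ p i)"
      by (rule prod.If_cases) simp
    finally show ?thesis by simp
  qed
  then show ?thesis unfolding det_def by simp
qed

lemma det_rank_one_add_subsets:
  fixes M :: "'a::comm_ring_1^'n^'n" and a b :: "'a^'n"
  shows "det ((\<chi> i j. a $ i * b $ j) + M) =
    (\<Sum>S\<in>Pow UNIV. (\<Prod>i\<in>S. a $ i) * det (\<chi> i. if i \<in> S then b else M $ i))"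
proof -
  let ?P = "{p. p permutes (UNIV :: 'n set)}"
  have "det ((\<chi> i j. a $ i * b $ j) + M) =
      (\<Sum>p\<in>?P. of_int (sign p) * (\<Prod>i\<in>UNIV. a $ i * b $ p i + M $ i $ p i))"
    by (simp add: det_def)
  also have "\<dots> = (\<Sum>p\<in>?P. \<Sum>S\<in>Pow UNIV.
      (\<Prod>i\<in>S. a $ i) * (of_int (sign p) * ((\<Prod>i\<in>S. b $ p i) * (\<Prod>i\<in>- S. M $ i $ p i))))"
    by (simp add: prod_add sum_distrib_left prod.distrib Compl_eq_Diff_UNIV mult_ac)
  also have "\<dots> = (\<Sum>S\<in>Pow UNIV. (\<Prod>i\<in>S. a $ i) * det (\<chi> i. if i \<in> S then b else M $ i))"
    by (subst sum.swap) (simp add: det_rows_replaced sum_distrib_left)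
  finally show ?thesis .
qed

lemma det_rank_one_add:
  fixes M :: "'a::comm_ring_1^'n^'n" and a b :: "'a^'n"
  shows "det ((\<chi> i j. a $ i * b $ j) + M) = det M +
    (\<Sum>k\<in>UNIV. \<Sum>p | p permutes UNIV. of_int (sign p) * (a $ k * b $ p k * (\<Prod>i\<in>- {k}. M $ i $ p i)))"
proof -
  define g where "g S = (\<Prod>i\<in>S. a $ i) * det (\<chi> i. if i \<in> S then b else M $ i)" for S
  have "det ((\<chi> i j. a $ i * b $ j) + M) = (\<Sum>S\<in>Pow UNIV. g S)"
    unfolding g_def by (rule det_rank_one_add_subsets)
  also have "\<dots> = (\<Sum>S\<in>insert {} (range (\<lambda>k. {k})). g S)"
  proof (rule sum.mono_neutral_right)
    show "\<forall>S\<in>Pow UNIV - insert {} (range (\<lambda>k. {k})). g S = 0"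
    proof
      fix S :: "'n set" assume "S \<in> Pow UNIV - insert {} (range (\<lambda>k. {k}))"
      then obtain i j where ij: "i \<in> S" "j \<in> S" "i \<noteq> j" by blast
      then have "det (\<chi> i. if i \<in> S then b else M $ i) = 0"
        by (intro det_identical_rows[of i j]) (simp_all add: row_def vec_eq_iff)
      then show "g S = 0" by (simp add: g_def)
    qed
  qed auto
  also have "\<dots> = g {} + (\<Sum>k\<in>UNIV. g {k})"
    by (subst sum.insert) (auto simp: sum.reindex inj_on_def)
  also have "g {} = det M" by (simp add: g_def)
  also have "(\<Sum>k\<in>UNIV. g {k}) =
      (\<Sum>k\<in>UNIV. \<Sum>p | p permutes UNIV. of_int (sign p) * (a $ k * b $ p k * (\<Prod>i\<in>- {k}. M $ i $ p i)))"
    unfolding g_def det_rows_replaced by (simp add: sum_distrib_left mult_ac)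
  finally show ?thesis .
qed

lemma neg_one_power_diff_mult:
  assumes "1 \<le> c" "c \<le> n"
  shows "(-1 :: 'a::comm_ring_1) ^ (n - c) * (-1) ^ (n - 1) = (-1) ^ (c - 1)"
proof -
  have "(-1 :: 'a) ^ (n - c) * (-1) ^ (n - 1) = (-1) ^ (n - c + (n - 1))"
    by (simp only: power_add)
  also have "n - c + (n - 1) = 2 * (n - c) + (c - 1)" using assms by simp
  also have "(-1 :: 'a) ^ (2 * (n - c) + (c - 1)) = (-1) ^ (c - 1)"
    by (simp add: power_add power_mult)
  finally show ?thesis .
qed

lemma path_cycles_summand_perm_graph_cut:
  fixes p :: "'n::finite \<Rightarrow> 'n" and C :: "'a::comm_ring_1^'n^'n" and a b :: "'a^'n"
  assumes "p permutes UNIV"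
  shows "(- 1) ^ num_cycles (perm_graph_cut p k) * b $ p k * a $ k * (\<Prod>(i, j)\<in>perm_graph_cut p k. C $ i $ j) =
    of_int (sign p) * (a $ k * b $ p k * (\<Prod>i\<in>- {k}. (- C) $ i $ p i))"
proof -
  have perm: "permutation p" by (rule permutes_imp_permutation[OF _ assms]) simp
  define c where "c = card (range (orbit p))"
  have c: "1 \<le> c" "c \<le> CARD('n)"
    by (simp_all add: c_def Suc_le_eq card_gt_0_iff card_image_le)
  have "(\<Prod>i\<in>- {k}. (- C) $ i $ p i) = (\<Prod>i\<in>- {k}. (- 1) * C $ i $ p i)" by simp
  also have "\<dots> = (- 1) ^ (CARD('n) - 1) * (\<Prod>i\<in>- {k}. C $ i $ p i)"
    by (subst prod.distrib) (simp add: Compl_eq_Diff_UNIV card_Diff_singleton)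
  finally have neg_prod: "(\<Prod>i\<in>- {k}. (- C) $ i $ p i) = (- 1) ^ (CARD('n) - 1) * (\<Prod>i\<in>- {k}. C $ i $ p i)" .
  have "(- 1) ^ num_cycles (perm_graph_cut p k) * b $ p k * a $ k * (\<Prod>(i, j)\<in>perm_graph_cut p k. C $ i $ j) =
      (- 1) ^ (c - 1) * (a $ k * b $ p k * (\<Prod>i\<in>- {k}. C $ i $ p i))"
    by (simp add: path_cycles_graph_perm_graph_cut(2)[OF perm] prod_perm_graph_cut c_def mult_ac)
  also have "\<dots> = (- 1) ^ (CARD('n) - c) * (a $ k * b $ p k * ((- 1) ^ (CARD('n) - 1) * (\<Prod>i\<in>- {k}. C $ i $ p i)))"
    unfolding neg_one_power_diff_mult[OF c, symmetric] by (simp only: mult_ac)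
  also have "\<dots> = of_int (sign p) * (a $ k * b $ p k * (\<Prod>i\<in>- {k}. (- C) $ i $ p i))"
    unfolding neg_prod by (simp add: sign_eq_neg_one_pow_orbits[OF perm] c_def)
  finally show ?thesis .
qed

theorem lemmaA4:
  fixes C :: "'a::comm_ring_1 ^ 'n ^ 'n" and a b :: "'a ^ 'n"
  shows "det ((\<chi> i j. a $ i * b $ j) - C) =
    det (- C) +
    (\<Sum>(E, s, t) \<in> {(E, s, t). path_cycles_graph E s t}.
        (- 1) ^ num_cycles E * b $ s * a $ t * (\<Prod>(i, j) \<in> E. C $ i $ j))"
proof -
  let ?P = "{p. p permutes (UNIV :: 'n set)}"
  define summand where "summand = (\<lambda>(E, s, t). (- 1) ^ num_cycles E * b $ s * a $ t * (\<Prod>(i, j) \<in> E. C $ i $ j))"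
  define \<Phi> where "\<Phi> = (\<lambda>(p :: 'n \<Rightarrow> 'n, k). (perm_graph_cut p k, p k, k))"
  have "(\<Sum>x \<in> {(E, s, t). path_cycles_graph E s t}. summand x) = (\<Sum>x \<in> ?P \<times> UNIV. summand (\<Phi> x))"
    unfolding \<Phi>_def by (rule sum.reindex_bij_betw[OF bij_betw_perm_graph_cut, symmetric])
  also have "\<dots> = (\<Sum>p\<in>?P. \<Sum>k\<in>UNIV. summand (\<Phi> (p, k)))"
    by (simp add: sum.cartesian_product)
  also have "\<dots> = (\<Sum>k\<in>UNIV. \<Sum>p\<in>?P. summand (\<Phi> (p, k)))"
    by (rule sum.swap)
  also have "\<dots> = (\<Sum>k\<in>UNIV. \<Sum>p\<in>?P. of_int (sign p) * (a $ k * b $ p k * (\<Prod>i\<in>- {k}. (- C) $ i $ p i)))"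
    unfolding summand_def \<Phi>_def by (intro sum.cong refl) (simp add: path_cycles_summand_perm_graph_cut)
  finally show ?thesis
    unfolding diff_conv_add_uminus det_rank_one_add summand_def by simp
qed

end
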